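(* Let $n\ge6$ and let $U_i=U[z_i,\lambda_i]$, $i=1,2,3$, be three bubbles with $Q:=\max\{q_{12},q_{13},q_{23}\}<\delta$. There exist $\delta_0>0$ and $C>0$ depending only on $n$ such that if $\delta\le\delta_0$ then \[\int_{\mathbb{R}^n}U_1U_2U_3\le C\,Q^{3/2}\log(1/Q)\ \text{ if }n=6,\qquad \int_{\mathbb{R}^n}U_1^{p-1}U_2U_3\le C\,Q^{\frac{n-1}{n-2}}|\log Q|^{\frac{n-5}{n}}\ \text{ if }n\ge7.\]
   Context: $p=\frac{n+2}{n-2}$; $U[z,\lambda](x)=(n(n-2))^{\frac{n-2}{4}}\big(\frac{\lambda}{1+\lambda^2|x-z|^2}\big)^{\frac{n-2}{2}}$; $q_{ij}=\big(\frac{\lambda_i}{\lambda_j}+\frac{\lambda_j}{\lambda_i}+\lambda_i\lambda_j|z_i-z_j|^2\big)^{-\frac{n-2}{2}}$. *)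

theory Defs
  imports "HOL-Analysis.Analysis"
begin

definition bubble :: "'a::euclidean_space \<Rightarrow> real \<Rightarrow> 'a \<Rightarrow> real" where
  "bubble z lam x =
     (real DIM('a) * (real DIM('a) - 2)) powr ((real DIM('a) - 2) / 4) *
     (lam / (1 + lam\<^sup>2 * (norm (x - z))\<^sup>2)) powr ((real DIM('a) - 2) / 2)"

definition qint :: "'a::euclidean_space \<Rightarrow> real \<Rightarrow> 'a \<Rightarrow> real \<Rightarrow> real" where
  "qint zi li zj lj =
     (li / lj + lj / li + li * lj * (norm (zi - zj))\<^sup>2) powr (- (real DIM('a) - 2) / 2)"

definition crit_exp :: "'a::euclidean_space itself \<Rightarrow> real" where
  "crit_exp _ = (real DIM('a) + 2) / (real DIM('a) - 2)"

end

theory Submission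
  imports Defs
begin

text \<open>
  Write \<open>w[z,\<lambda>](x) = \<lambda> / (1 + \<lambda>\<^sup>2 |x - z|\<^sup>2)\<close>, so that \<open>U[z,\<lambda>] = c\<^sub>n w[z,\<lambda>]\<^bsup>(n-2)/2\<^esup>\<close>.
  Both integrands are constant multiples of \<open>w\<^sub>1\<^sup>2 w\<^sub>2\<^sup>m w\<^sub>3\<^sup>m\<close> with \<open>m = (n-2)/2\<close>
  (for \<open>n = 6\<close> this is \<open>U\<^sub>1U\<^sub>2U\<^sub>3\<close>), and comparing with the smallest \<open>w\<^sub>i\<close> bounds this
  by the sum of the pair terms \<open>(w\<^sub>iw\<^sub>j)\<^bsup>n/2\<^esup>\<close>.

  The pair integral is \<open>O(\<epsilon>\<^bsup>n/2\<^esup> (1 + log (1/\<epsilon>)))\<close> with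
  \<open>\<epsilon> = 1/(\<lambda>\<^sub>i/\<lambda>\<^sub>j + \<lambda>\<^sub>j/\<lambda>\<^sub>i + \<lambda>\<^sub>i\<lambda>\<^sub>j|z\<^sub>i - z\<^sub>j|\<^sup>2) = q\<^sub>i\<^sub>j\<^bsup>2/(n-2)\<^esup>\<close>:
  for \<open>\<lambda>\<^sub>i \<le> \<lambda>\<^sub>j\<close> the product is dominated pointwise by superpositions of indicator
  functions of balls centred at \<open>z\<^sub>i\<close> and \<open>z\<^sub>j\<close>, whose integrals reduce by Fubini to
  explicit one-dimensional integrals. Hence the triple integral is \<open>O(Q\<^bsup>n/(n-2)\<^esup> log (1/Q))\<close>
  for \<open>Q < 1/e\<close>, which is the claim for \<open>n = 6\<close> and stronger than it for \<open>n \<ge> 7\<close>.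
\<close>


lemma has_integral_powr_interval:
  fixes a b e :: real
  assumes "0 < a" "a \<le> b" "e \<noteq> -1"
  shows "((\<lambda>t. t powr e) has_integral (b powr (e + 1) - a powr (e + 1)) / (e + 1)) {a..b}"
proof -
  have "((\<lambda>t. t powr (e + 1) / (e + 1)) has_real_derivative t powr e) (at t within {a..b})"
    if "t \<in> {a..b}" for t
  proof -
    have "((\<lambda>t. t powr (e + 1)) has_real_derivative (e + 1) * t powr (e + 1 - 1)) (at t)"
      using that assms by (intro has_real_derivative_powr) auto
    then have "((\<lambda>t. t powr (e + 1) / (e + 1)) has_real_derivative (e + 1) * t powr (e + 1 - 1) / (e + 1)) (at t)"
      by (rule DERIV_cdivide)
    then show ?thesis
      using assms by (auto intro: has_field_derivative_at_within)
  qed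
  then have "((\<lambda>t. t powr e) has_integral (b powr (e + 1) / (e + 1) - a powr (e + 1) / (e + 1))) {a..b}"
    using assms
    by (intro fundamental_theorem_of_calculus) (auto simp flip: has_real_derivative_iff_has_vector_derivative)
  then show ?thesis
    by (simp add: diff_divide_distrib)
qed

lemma has_integral_inverse_interval:
  fixes a b :: real
  assumes "0 < a" "a \<le> b"
  shows "((\<lambda>t. 1 / t) has_integral (ln b - ln a)) {a..b}"
  using assms
  by (intro fundamental_theorem_of_calculus)
     (auto intro!: derivative_eq_intros simp flip: has_real_derivative_iff_has_vector_derivative
           simp: field_simps)

lemma nn_integral_powr_Icc:
  fixes a b s :: real
  assumes "0 < s" "0 < a" "a \<le> b"
  shows "(\<integral>\<^sup>+t. ennreal (indicator {a..b} t * t powr (-s - 1)) \<partial>lborel)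
           = ennreal ((a powr (-s) - b powr (-s)) / s)"
proof -
  have "((\<lambda>t. t powr (-s - 1)) has_integral (b powr (-s - 1 + 1) - a powr (-s - 1 + 1)) / (-s - 1 + 1)) {a..b}"
    using assms by (intro has_integral_powr_interval) auto
  then have "(\<integral>\<^sup>+t. ennreal (indicator {a..b} t * t powr (-s - 1)) \<partial>lborel)
               = ennreal ((b powr (-s - 1 + 1) - a powr (-s - 1 + 1)) / (-s - 1 + 1))"
    by (intro nn_integral_has_integral_lebesgue) auto
  also have "(b powr (-s - 1 + 1) - a powr (-s - 1 + 1)) / (-s - 1 + 1) = (a powr (-s) - b powr (-s)) / s"
    using assms by (simp add: field_simps)
  finally show ?thesis .
qed

lemma nn_integral_powr_Ici:
  fixes a s :: real
  assumes "0 < s" "0 < a"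
  shows "(\<integral>\<^sup>+t. ennreal (indicator {a..} t * t powr (-s - 1)) \<partial>lborel) = ennreal (a powr (-s) / s)"
proof -
  have "((\<lambda>t. t powr (-s - 1)) has_integral -(a powr (-s - 1 + 1)) / (-s - 1 + 1)) {a..}"
    using assms by (intro has_integral_powr_to_inf) auto
  then have "(\<integral>\<^sup>+t. ennreal (indicator {a..} t * t powr (-s - 1)) \<partial>lborel)
               = ennreal (-(a powr (-s - 1 + 1)) / (-s - 1 + 1))"
    by (intro nn_integral_has_integral_lebesgue) auto
  also have "-(a powr (-s - 1 + 1)) / (-s - 1 + 1) = a powr (-s) / s"
    using assms by (simp add: field_simps)
  finally show ?thesis .
qed

lemma nn_integral_inverse_Icc:
  fixes a b :: real
  assumes "0 < a" "a \<le> b"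
  shows "(\<integral>\<^sup>+t. ennreal (indicator {a..b} t * (1 / t)) \<partial>lborel) = ennreal (ln b - ln a)"
  using has_integral_inverse_interval[OF assms] assms
  by (intro nn_integral_has_integral_lebesgue) auto

text \<open>
  Since \<open>l|x - c| \<le> t\<close> iff \<open>x \<in> B(c, t/l)\<close>, this is the superposition \<open>\<integral> K(t) \<one>\<^bsub>B(c, t/l)\<^esub>(x) dt\<close>
  of balls, whose integral over \<open>x\<close> reduces by Fubini to a one-dimensional integral.
\<close>

definition ball_superposition :: "(real \<Rightarrow> real) \<Rightarrow> real \<Rightarrow> 'a::euclidean_space \<Rightarrow> 'a \<Rightarrow> ennreal" where
  "ball_superposition K l c x = (\<integral>\<^sup>+t. ennreal (K t) * indicator {l * norm (x - c)..} t \<partial>lborel)"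

lemma nn_integral_ball_superposition:
  fixes c :: "'a::euclidean_space"
  assumes l: "0 < l" and [measurable]: "K \<in> borel_measurable borel"
    and K_nonneg: "\<And>t. 0 \<le> K t" and K_neg: "\<And>t. t < 0 \<Longrightarrow> K t = 0"
  shows "(\<integral>\<^sup>+x. ball_superposition K l c x \<partial>lborel)
           = ennreal (unit_ball_vol DIM('a) / l ^ DIM('a)) * (\<integral>\<^sup>+t. ennreal (K t * t ^ DIM('a)) \<partial>lborel)"
proof -
  let ?R = "{p. l * norm (fst p - c) \<le> snd p}"
  have "(\<integral>\<^sup>+x. ball_superposition K l c x \<partial>lborel)
          = (\<integral>\<^sup>+x. \<integral>\<^sup>+t. ennreal (K t) * indicator ?R (x, t) \<partial>lborel \<partial>(lborel :: 'a measure))"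
    unfolding ball_superposition_def by (simp add: indicator_def)
  also have "\<dots> = (\<integral>\<^sup>+t. \<integral>\<^sup>+x. ennreal (K t) * indicator ?R (x, t) \<partial>(lborel :: 'a measure) \<partial>lborel)"
    by (rule lborel_pair.Fubini') measurable
  also have "\<dots> = (\<integral>\<^sup>+t. ennreal (unit_ball_vol DIM('a) / l ^ DIM('a)) * ennreal (K t * t ^ DIM('a)) \<partial>lborel)"
  proof (rule nn_integral_cong)
    fix t :: real
    show "(\<integral>\<^sup>+x. ennreal (K t) * indicator ?R (x, t) \<partial>(lborel :: 'a measure))
            = ennreal (unit_ball_vol DIM('a) / l ^ DIM('a)) * ennreal (K t * t ^ DIM('a))"
    proof (cases "t < 0")
      case True
      then show ?thesis by (simp add: K_neg)
    next
      case False
      have "indicator ?R (x, t) = (indicator (cball c (t / l)) x :: ennreal)" for x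
        using l by (auto simp: indicator_def dist_norm norm_minus_commute field_simps)
      then have "(\<integral>\<^sup>+x. ennreal (K t) * indicator ?R (x, t) \<partial>(lborel :: 'a measure))
                   = ennreal (K t) * emeasure lborel (cball c (t / l))"
        by (simp add: nn_integral_cmult_indicator)
      also have "emeasure lborel (cball c (t / l)) = ennreal (unit_ball_vol DIM('a) * (t / l) ^ DIM('a))"
        using False l by (intro emeasure_cball) auto
      finally show ?thesis
        using False l K_nonneg[of t] by (simp add: ennreal_mult[symmetric] power_divide field_simps)
    qed
  qed
  also have "\<dots> = ennreal (unit_ball_vol DIM('a) / l ^ DIM('a)) * (\<integral>\<^sup>+t. ennreal (K t * t ^ DIM('a)) \<partial>lborel)"
    by (rule nn_integral_cmult) measurable
  finally show ?thesis .
qed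

lemma ball_superposition_powr_Icc:
  fixes c :: "'a::euclidean_space"
  assumes "0 < s" "0 < a" "a \<le> b"
  shows "ball_superposition (\<lambda>t. indicator {a..b} t * t powr (-s - 1)) l c x
           = ennreal (if l * norm (x - c) \<le> b
                      then (max (l * norm (x - c)) a powr (-s) - b powr (-s)) / s else 0)"
proof -
  let ?u = "l * norm (x - c)"
  have "ennreal (indicator {a..b} t * t powr (-s - 1)) * indicator {?u..} t
          = ennreal (indicator {max ?u a..b} t * t powr (-s - 1))" for t
    by (auto simp: indicator_def)
  then have "ball_superposition (\<lambda>t. indicator {a..b} t * t powr (-s - 1)) l c x
               = (\<integral>\<^sup>+t. ennreal (indicator {max ?u a..b} t * t powr (-s - 1)) \<partial>lborel)"
    by (simp add: ball_superposition_def)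
  also have "\<dots> = ennreal (if ?u \<le> b then (max ?u a powr (-s) - b powr (-s)) / s else 0)"
  proof (cases "?u \<le> b")
    case True
    then show ?thesis
      using assms by (simp add: nn_integral_powr_Icc)
  next
    case False
    then have "indicator {max ?u a..b} t = (0 :: real)" for t
      by (simp add: indicator_def)
    then show ?thesis
      using False by simp
  qed
  finally show ?thesis .
qed

lemma ball_superposition_powr_Ici:
  fixes c :: "'a::euclidean_space"
  assumes "0 < s" "0 < a"
  shows "ball_superposition (\<lambda>t. indicator {a..} t * t powr (-s - 1)) l c x
           = ennreal (max (l * norm (x - c)) a powr (-s) / s)"
proof -
  have "ennreal (indicator {a..} t * t powr (-s - 1)) * indicator {l * norm (x - c)..} t
          = ennreal (indicator {max (l * norm (x - c)) a..} t * t powr (-s - 1))" for t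
    by (auto simp: indicator_def)
  then show ?thesis
    using assms by (simp add: ball_superposition_def nn_integral_powr_Ici)
qed

lemma nn_integral_powr_Icc_moment:
  fixes a b :: real and N :: nat
  assumes "0 < a" "a \<le> b"
  shows "(\<integral>\<^sup>+t. ennreal (indicator {a..b} t * t powr (- real N - 1) * t ^ N) \<partial>lborel)
           = ennreal (ln b - ln a)"
proof -
  have "t powr (- real N - 1) * t ^ N = 1 / t" if "0 < t" for t
    using that by (simp add: powr_realpow[symmetric] powr_add[symmetric] powr_minus divide_inverse)
  then have "ennreal (indicator {a..b} t * t powr (- real N - 1) * t ^ N)
               = ennreal (indicator {a..b} t * (1 / t))" for t
    using assms by (cases "t \<in> {a..b}") auto
  then show ?thesis
    using nn_integral_inverse_Icc[OF assms] by simp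
qed

lemma nn_integral_powr_Ici_moment:
  fixes a s :: real and N :: nat
  assumes "0 < a" "real N < s"
  shows "(\<integral>\<^sup>+t. ennreal (indicator {a..} t * t powr (-s - 1) * t ^ N) \<partial>lborel)
           = ennreal (a powr (real N - s) / (s - real N))"
proof -
  have "t powr (-s - 1) * t ^ N = t powr (-(s - real N) - 1)" if "0 < t" for t
    using that by (simp add: powr_realpow[symmetric] powr_add[symmetric] algebra_simps)
  then have "ennreal (indicator {a..} t * t powr (-s - 1) * t ^ N)
               = ennreal (indicator {a..} t * t powr (-(s - real N) - 1))" for t
    using assms by (cases "t \<in> {a..}") auto
  then show ?thesis
    using nn_integral_powr_Ici[of "s - real N" a] assms by simp
qed

definition bubble_base :: "real \<Rightarrow> real \<Rightarrow> real" where
  "bubble_base l r = l / (1 + l\<^sup>2 * r\<^sup>2)"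

lemma bubble_base_pos: "0 < l \<Longrightarrow> 0 < bubble_base l r"
  unfolding bubble_base_def by (intro divide_pos_pos add_pos_nonneg) auto

lemma borel_measurable_bubble_base[measurable]:
  "(\<lambda>x. bubble_base l (norm (x - z))) \<in> borel_measurable borel"
  for z :: "'a::euclidean_space"
  unfolding bubble_base_def by measurable

lemma bubble_eq_bubble_base:
  "bubble z l x = (real DIM('a) * (real DIM('a) - 2)) powr ((real DIM('a) - 2) / 4)
                    * bubble_base l (norm (x - z)) powr ((real DIM('a) - 2) / 2)"
  for z x :: "'a::euclidean_space"
  unfolding bubble_def bubble_base_def ..

lemma bubble_base_unit_scale: "bubble_base l r = l * (1 / (1 + (l * r)\<^sup>2))"
  unfolding bubble_base_def by (simp add: power_mult_distrib)

lemma bubble_base_antimono: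
  assumes "0 < l" "0 \<le> a" "a \<le> b"
  shows "bubble_base l b \<le> bubble_base l a"
proof -
  have "a\<^sup>2 \<le> b\<^sup>2"
    using assms by (intro power_mono) auto
  then have "1 + l\<^sup>2 * a\<^sup>2 \<le> 1 + l\<^sup>2 * b\<^sup>2"
    by (simp add: mult_left_mono)
  moreover have "0 < 1 + l\<^sup>2 * a\<^sup>2" "0 < 1 + l\<^sup>2 * b\<^sup>2"
    by (auto intro: add_pos_nonneg)
  ultimately show ?thesis
    unfolding bubble_base_def using assms by (intro divide_left_mono) auto
qed

lemma bubble_base_le_of_le_four_times:
  assumes "0 < l" "1 + l\<^sup>2 * d\<^sup>2 \<le> 4 * (1 + l\<^sup>2 * r\<^sup>2)"
  shows "bubble_base l r \<le> 4 * l / (1 + l\<^sup>2 * d\<^sup>2)"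
proof -
  have "0 < 1 + l\<^sup>2 * r\<^sup>2" "0 < 1 + l\<^sup>2 * d\<^sup>2"
    by (auto intro: add_pos_nonneg)
  then show ?thesis
    using assms unfolding bubble_base_def by (simp add: divide_simps)
qed

lemma bubble_base_le_near_other:
  assumes "0 < l" "0 \<le> a" "0 \<le> b" "d \<le> a + b" "0 \<le> d" "l\<^sup>2 * b\<^sup>2 \<le> (1 + l\<^sup>2 * d\<^sup>2) / 4"
  shows "bubble_base l a \<le> 4 * l / (1 + l\<^sup>2 * d\<^sup>2)"
proof (rule bubble_base_le_of_le_four_times)
  have "d\<^sup>2 \<le> (a + b)\<^sup>2"
    using assms by (intro power_mono) auto
  also have "\<dots> \<le> 2 * a\<^sup>2 + 2 * b\<^sup>2"
    using sum_squares_ge_zero[of "a - b" 0] by (simp add: power2_eq_square algebra_simps)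
  finally have "l\<^sup>2 * d\<^sup>2 \<le> l\<^sup>2 * (2 * a\<^sup>2 + 2 * b\<^sup>2)"
    by (intro mult_left_mono) auto
  then show "1 + l\<^sup>2 * d\<^sup>2 \<le> 4 * (1 + l\<^sup>2 * a\<^sup>2)"
    using assms by (simp add: algebra_simps)
qed (use assms in auto)

lemma bubble_base_le_far:
  assumes "0 < l" "0 \<le> d" "d \<le> 2 * r"
  shows "bubble_base l r \<le> 4 * l / (1 + l\<^sup>2 * d\<^sup>2)"
proof (rule bubble_base_le_of_le_four_times)
  have "d\<^sup>2 \<le> (2 * r)\<^sup>2"
    using assms by (intro power_mono) auto
  then have "l\<^sup>2 * d\<^sup>2 \<le> l\<^sup>2 * (4 * r\<^sup>2)"
    by (intro mult_left_mono) (auto simp: power_mult_distrib)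
  then show "1 + l\<^sup>2 * d\<^sup>2 \<le> 4 * (1 + l\<^sup>2 * r\<^sup>2)"
    by (simp add: algebra_simps)
qed (use assms in auto)

lemma bubble_base_rescale_le:
  assumes "0 < l" "0 < m" "0 \<le> r" "1 \<le> 4 * (l\<^sup>2 * r\<^sup>2)"
  shows "bubble_base m r \<le> 5 * (l / m) * bubble_base l r"
proof -
  have r: "0 < r"
    using assms by (cases "r = 0") auto
  have pos: "0 < m\<^sup>2 * r\<^sup>2" "0 < 1 + l\<^sup>2 * r\<^sup>2"
    using r assms by (auto intro: add_pos_nonneg)
  have "bubble_base m r \<le> m / (m\<^sup>2 * r\<^sup>2)"
    unfolding bubble_base_def using assms pos by (intro divide_left_mono) auto
  also have "\<dots> = (1 + l\<^sup>2 * r\<^sup>2) / (m * r\<^sup>2 * (1 + l\<^sup>2 * r\<^sup>2))"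
    using assms r pos by (simp add: power2_eq_square)
  also have "\<dots> \<le> (5 * (l\<^sup>2 * r\<^sup>2)) / (m * r\<^sup>2 * (1 + l\<^sup>2 * r\<^sup>2))"
    using assms r pos by (intro divide_right_mono) (linarith, simp)
  also have "\<dots> = 5 * (l / m) * bubble_base l r"
    unfolding bubble_base_def using assms r by (simp add: power2_eq_square)
  finally show ?thesis .
qed

lemma powr_inverse_one_plus_square_le:
  fixes u k :: real
  assumes "0 \<le> u" "0 \<le> k"
  shows "(1 / (1 + u\<^sup>2)) powr k \<le> max u 1 powr (-2 * k)"
proof -
  have pos: "0 < max u 1" "0 < 1 + u\<^sup>2"
    by (auto intro: add_pos_nonneg)
  have "(max u 1)\<^sup>2 \<le> 1 + u\<^sup>2"
    by (cases "u \<le> 1") (auto simp: max_def)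
  then have "1 / (1 + u\<^sup>2) \<le> 1 / (max u 1)\<^sup>2"
    using pos by (intro divide_left_mono) simp_all
  then have "(1 / (1 + u\<^sup>2)) powr k \<le> (1 / (max u 1)\<^sup>2) powr k"
    using assms pos by (intro powr_mono2) simp_all
  also have "1 / (max u 1)\<^sup>2 = max u 1 powr (-2)"
    using pos by (simp add: powr_minus powr_realpow divide_inverse)
  finally show ?thesis
    by (simp add: powr_powr)
qed

lemma powr_neg_le_twice_diff:
  fixes M R n :: real
  assumes "1 \<le> M" "2 * M \<le> R" "1 \<le> n"
  shows "M powr (-n) \<le> 2 * (M powr (-n) - R powr (-n))"
proof -
  have "R powr (-n) \<le> (2 * M) powr (-n)"
    using assms by (intro powr_mono2') auto
  also have "\<dots> = 2 powr (-n) * M powr (-n)"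
    by (rule powr_mult)
  also have "\<dots> \<le> 2 powr (-1) * M powr (-n)"
    using assms by (intro mult_right_mono powr_mono) auto
  finally show ?thesis
    by (simp add: powr_minus)
qed

definition interaction_base :: "'a::euclidean_space \<Rightarrow> real \<Rightarrow> 'a \<Rightarrow> real \<Rightarrow> real" where
  "interaction_base zi li zj lj = li / lj + lj / li + li * lj * (norm (zi - zj))\<^sup>2"

lemma interaction_base_ge_2:
  assumes "0 < li" "0 < lj"
  shows "2 \<le> interaction_base zi li zj lj"
proof -
  have "2 * li * lj \<le> li\<^sup>2 + lj\<^sup>2"
    using sum_squares_ge_zero[of "li - lj" 0] by (simp add: power2_eq_square algebra_simps)
  then have "2 \<le> li / lj + lj / li"
    using assms by (simp add: field_simps power2_eq_square)
  moreover have "0 \<le> li * lj * (norm (zi - zj))\<^sup>2"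
    using assms by simp
  ultimately show ?thesis
    unfolding interaction_base_def by linarith
qed

lemma interaction_base_commute: "interaction_base zj lj zi li = interaction_base zi li zj lj"
  unfolding interaction_base_def by (simp add: norm_minus_commute ac_simps)

text \<open>
  Two bubbles with \<open>\<lambda>\<^sub>i = li \<le> lj = \<lambda>\<^sub>j\<close>; \<open>eps\<close> is \<open>q\<^sub>i\<^sub>j\<^bsup>2/(n-2)\<^esup>\<close> when \<open>n\<close> is the dimension.
  \<open>near_layer r\<close> and \<open>far_layer\<close> are the ball superpositions of the kernels
  \<open>t\<^bsup>-n-1\<^esup>\<close> on \<open>[1, r]\<close> and \<open>t\<^bsup>-2n-1\<^esup>\<close> on \<open>[T, \<infinity>)\<close>
  (\<open>ennreal_near_layer\<close>, \<open>ennreal_far_layer\<close>).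
\<close>

locale bubble_pair =
  fixes zi zj :: "'a::euclidean_space" and li lj n :: real
  assumes li_pos: "0 < li" and li_le_lj: "li \<le> lj" and n_ge_1: "1 \<le> n"
begin

definition D :: real where "D = 1 + li\<^sup>2 * (norm (zi - zj))\<^sup>2"
definition h :: real where "h = li / lj"
definition R :: real where "R = max (sqrt D / h) 2"
definition b :: real where "b = min 1 (4 / D)"
definition T :: real where "T = b powr (-1/2)"
definition eps :: real where "eps = 1 / interaction_base zi li zj lj"

definition near_layer :: "real \<Rightarrow> real \<Rightarrow> real" where
  "near_layer r u = (if u \<le> r then (max u 1 powr (-n) - r powr (-n)) / n else 0)"
definition far_layer :: "real \<Rightarrow> real" where
  "far_layer u = max u T powr (-(2 * n)) / (2 * n)"

definition near_coeff :: real where "near_coeff = 2 * n * (4 * li / D) powr (n / 2) * lj powr (n / 2)"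
definition far_coeff :: real where "far_coeff = (5 * h) powr (n / 2) * li powr n"

lemma lj_pos: "0 < lj"
  using li_pos li_le_lj by simp

lemma D_ge_1: "1 \<le> D"
  unfolding D_def by simp

lemma h_pos: "0 < h" and h_le_1: "h \<le> 1"
  unfolding h_def using li_pos li_le_lj by auto

lemma b_pos: "0 < b" and b_le_1: "b \<le> 1"
  unfolding b_def using D_ge_1 by auto

lemma T_ge_1: "1 \<le> T"
proof -
  have "b powr (1/2) \<le> 1" "0 < b powr (1/2)"
    using b_pos b_le_1 by (auto intro: powr_le1)
  then show ?thesis
    unfolding T_def by (simp add: powr_minus one_le_inverse)
qed

lemma T_powr: "T powr (-n) = b powr (n / 2)"
  unfolding T_def using b_pos by (simp add: powr_powr)

lemma R_ge_2: "2 \<le> R"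
  unfolding R_def by simp

lemma near_layer_nonneg:
  assumes "1 \<le> r"
  shows "0 \<le> near_layer r u"
proof -
  have "u \<le> r \<Longrightarrow> r powr (-n) \<le> max u 1 powr (-n)"
    using assms n_ge_1 by (intro powr_mono2') auto
  then show ?thesis
    unfolding near_layer_def using n_ge_1 by auto
qed

lemma far_layer_nonneg: "0 \<le> far_layer u"
  unfolding far_layer_def using n_ge_1 by simp

lemma unit_profile_product_le_layers:
  assumes "0 \<le> u"
  shows "((1 / (1 + u\<^sup>2)) * min (4 / D) (1 / (1 + u\<^sup>2))) powr (n / 2)
           \<le> n * b powr (n / 2) * near_layer T u + 2 * n * far_layer u"
proof -
  have p: "0 < 1 + u\<^sup>2"
    by (intro add_pos_nonneg) auto
  show ?thesis
  proof (cases "u \<le> T")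
    case True
    have "1 / (1 + u\<^sup>2) \<le> 1"
      using p by simp
    then have "min (4 / D) (1 / (1 + u\<^sup>2)) \<le> b"
      unfolding b_def by linarith
    then have "((1 / (1 + u\<^sup>2)) * min (4 / D) (1 / (1 + u\<^sup>2))) powr (n / 2) \<le> ((1 / (1 + u\<^sup>2)) * b) powr (n / 2)"
      using p D_ge_1 n_ge_1 by (intro powr_mono2 mult_left_mono) auto
    also have "\<dots> = (1 / (1 + u\<^sup>2)) powr (n / 2) * b powr (n / 2)"
      by (rule powr_mult)
    also have "\<dots> \<le> max u 1 powr (-2 * (n / 2)) * b powr (n / 2)"
      using assms n_ge_1 by (intro mult_right_mono powr_inverse_one_plus_square_le) auto
    also have "\<dots> = n * b powr (n / 2) * near_layer T u + 2 * n * far_layer u"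
    proof -
      have "T powr (-(2 * n)) = b powr (n / 2) * b powr (n / 2)"
        unfolding T_def using b_pos by (simp add: powr_powr powr_add[symmetric])
      then show ?thesis
        using True n_ge_1 T_powr by (simp add: near_layer_def far_layer_def max_absorb2 field_simps)
    qed
    finally show ?thesis .
  next
    case False
    then have u: "1 < u"
      using T_ge_1 by simp
    have "1 / (1 + u\<^sup>2) \<le> 1 / u\<^sup>2"
      using u p by (intro divide_left_mono) simp_all
    also have "1 / u\<^sup>2 = u powr (-2)"
      using u by (simp add: powr_minus powr_realpow divide_inverse)
    finally have le: "1 / (1 + u\<^sup>2) \<le> u powr (-2)" .
    then have "min (4 / D) (1 / (1 + u\<^sup>2)) \<le> u powr (-2)"
      by linarith
    then have "((1 / (1 + u\<^sup>2)) * min (4 / D) (1 / (1 + u\<^sup>2))) powr (n / 2) \<le> (u powr (-2) * u powr (-2)) powr (n / 2)"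
      using p D_ge_1 n_ge_1 le by (intro powr_mono2 mult_mono) auto
    also have "\<dots> = u powr (-(2 * n))"
      using u by (simp add: powr_add[symmetric] powr_powr)
    finally show ?thesis
      using False n_ge_1 by (simp add: near_layer_def far_layer_def max_def)
  qed
qed


lemma layer_sum_nonneg: "0 \<le> n * b powr (n / 2) * near_layer T u + 2 * n * far_layer u"
  using n_ge_1 near_layer_nonneg[OF T_ge_1] far_layer_nonneg by simp

lemma base_min_product_le_layers:
  assumes "0 \<le> r"
  shows "(bubble_base li r * min (4 * li / D) (bubble_base li r)) powr (n / 2)
           \<le> li powr n * (n * b powr (n / 2) * near_layer T (li * r) + 2 * n * far_layer (li * r))"
proof -
  let ?v = "1 / (1 + (li * r)\<^sup>2)"
  have "min (4 * li / D) (bubble_base li r) = li * min (4 / D) ?v"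
    unfolding bubble_base_unit_scale using li_pos by (simp add: min_mult_distrib_left ac_simps)
  then have "(bubble_base li r * min (4 * li / D) (bubble_base li r)) powr (n / 2)
               = (li * li) powr (n / 2) * (?v * min (4 / D) ?v) powr (n / 2)"
    unfolding bubble_base_unit_scale by (simp only: mult_ac) (simp only: powr_mult mult.assoc)
  also have "(li * li) powr (n / 2) = li powr n"
    by (simp only: powr_mult powr_add[symmetric]) simp
  also have "(?v * min (4 / D) ?v) powr (n / 2) \<le> n * b powr (n / 2) * near_layer T (li * r) + 2 * n * far_layer (li * r)"
    using assms li_pos by (intro unit_profile_product_le_layers) simp
  finally show ?thesis
    using li_pos by (simp add: mult_left_mono)
qed

text \<open>
  Near \<open>z\<^sub>j\<close> at scale \<open>1/\<lambda>\<^sub>i\<close>, i.e. for \<open>\<lambda>\<^sub>i|x - z\<^sub>j| \<le> \<surd>D/2\<close>, the factor \<open>w\<^sub>i\<close> is at most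
  \<open>4\<lambda>\<^sub>i/D\<close>; farther away \<open>w\<^sub>j\<close> is at most \<open>5\<lambda>\<^sub>i/\<lambda>\<^sub>j\<close> times the profile of scale \<open>\<lambda>\<^sub>i\<close> at \<open>z\<^sub>j\<close>,
  which leaves two bubbles of the same scale.
\<close>

lemma product_le_near_layer:
  assumes near: "li\<^sup>2 * (norm (x - zj))\<^sup>2 \<le> D / 4"
  shows "(bubble_base li (norm (x - zi)) * bubble_base lj (norm (x - zj))) powr (n / 2)
           \<le> near_coeff * near_layer R (lj * norm (x - zj))"
proof -
  define u where "u = lj * norm (x - zj)"
  have u0: "0 \<le> u"
    unfolding u_def using lj_pos by simp
  have dist: "norm (zi - zj) \<le> norm (x - zi) + norm (x - zj)"
    using norm_triangle_ineq4[of "x - zj" "x - zi"] by (simp add: norm_minus_commute)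
  have wi: "bubble_base li (norm (x - zi)) \<le> 4 * li / D"
    using bubble_base_le_near_other[OF li_pos norm_ge_zero norm_ge_zero dist norm_ge_zero] near
    unfolding D_def by simp
  have "(li * norm (x - zj))\<^sup>2 \<le> (sqrt D / 2)\<^sup>2"
    using near D_ge_1 by (simp add: power_mult_distrib power_divide)
  then have "li * norm (x - zj) \<le> sqrt D / 2"
    by (rule power2_le_imp_le) (use D_ge_1 in simp)
  then have "2 * (li * norm (x - zj)) / h \<le> sqrt D / h"
    using h_pos by (intro divide_right_mono) auto
  moreover have "2 * (li * norm (x - zj)) / h = 2 * u"
    unfolding u_def h_def using li_pos by simp
  ultimately have uR: "2 * max u 1 \<le> R"
    unfolding R_def by auto
  then have "u \<le> R"
    by linarith
  have "(bubble_base li (norm (x - zi)) * bubble_base lj (norm (x - zj))) powr (n / 2)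
          \<le> (4 * li / D * bubble_base lj (norm (x - zj))) powr (n / 2)"
    using wi n_ge_1 bubble_base_pos[OF li_pos] bubble_base_pos[OF lj_pos]
    by (intro powr_mono2 mult_right_mono) (auto intro: less_imp_le)
  also have "\<dots> = (4 * li / D) powr (n / 2) * lj powr (n / 2) * (1 / (1 + u\<^sup>2)) powr (n / 2)"
    unfolding bubble_base_unit_scale u_def by (simp only: powr_mult mult.assoc)
  also have "\<dots> \<le> (4 * li / D) powr (n / 2) * lj powr (n / 2) * max u 1 powr (-n)"
    using powr_inverse_one_plus_square_le[of u "n / 2"] u0 n_ge_1 by (intro mult_left_mono) auto
  also have "\<dots> \<le> (4 * li / D) powr (n / 2) * lj powr (n / 2) * (2 * (max u 1 powr (-n) - R powr (-n)))"
    using uR n_ge_1 by (intro mult_left_mono powr_neg_le_twice_diff) auto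
  also have "\<dots> = near_coeff * near_layer R u"
    using \<open>u \<le> R\<close> n_ge_1 by (simp add: near_coeff_def near_layer_def)
  finally show ?thesis
    unfolding u_def .
qed

lemma same_scale_product_le_layers:
  assumes r0: "0 \<le> ri" "0 \<le> rj" and dist: "norm (zi - zj) \<le> ri + rj"
  shows "(bubble_base li ri * bubble_base li rj) powr (n / 2)
           \<le> li powr n * ((n * b powr (n / 2) * near_layer T (li * ri) + 2 * n * far_layer (li * ri))
                         + (n * b powr (n / 2) * near_layer T (li * rj) + 2 * n * far_layer (li * rj)))"
proof -
  let ?layers = "\<lambda>r. n * b powr (n / 2) * near_layer T (li * r) + 2 * n * far_layer (li * r)"
  have bb: "0 < bubble_base li r" for r
    using bubble_base_pos li_pos by auto
  have D_eq: "D = 1 + li\<^sup>2 * (norm (zi - zj))\<^sup>2"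
    unfolding D_def ..
  show ?thesis
  proof (cases "ri \<le> rj")
    case True
    have "bubble_base li rj \<le> 4 * li / D" "bubble_base li rj \<le> bubble_base li ri"
      using bubble_base_le_far[OF li_pos norm_ge_zero, of "zi - zj" rj] bubble_base_antimono[OF li_pos r0(1) True] True dist
      unfolding D_eq by auto
    then have "(bubble_base li ri * bubble_base li rj) powr (n / 2)
                 \<le> (bubble_base li ri * min (4 * li / D) (bubble_base li ri)) powr (n / 2)"
      using bb n_ge_1 by (intro powr_mono2 mult_left_mono) (auto intro: less_imp_le)
    also have "\<dots> \<le> li powr n * ?layers ri"
      using r0 by (intro base_min_product_le_layers)
    finally have "(bubble_base li ri * bubble_base li rj) powr (n / 2) \<le> li powr n * ?layers ri" .
    moreover have "0 \<le> li powr n * ?layers rj"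
      using layer_sum_nonneg by simp
    ultimately show ?thesis
      by (simp only: distrib_left)
  next
    case False
    have "bubble_base li ri \<le> 4 * li / D" "bubble_base li ri \<le> bubble_base li rj"
      using bubble_base_le_far[OF li_pos norm_ge_zero, of "zi - zj" ri] bubble_base_antimono[OF li_pos r0(2), of ri] False dist
      unfolding D_eq by auto
    then have "(bubble_base li ri * bubble_base li rj) powr (n / 2)
                 \<le> (bubble_base li rj * min (4 * li / D) (bubble_base li rj)) powr (n / 2)"
      using bb n_ge_1 by (intro powr_mono2) (auto simp: mult.commute[of _ "bubble_base li rj"] intro: mult_left_mono less_imp_le)
    also have "\<dots> \<le> li powr n * ?layers rj"
      using r0 by (intro base_min_product_le_layers)
    finally have "(bubble_base li ri * bubble_base li rj) powr (n / 2) \<le> li powr n * ?layers rj" .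
    moreover have "0 \<le> li powr n * ?layers ri"
      using layer_sum_nonneg by simp
    ultimately show ?thesis
      by (simp only: distrib_left)
  qed
qed

lemma product_le_far_layers:
  assumes far: "\<not> li\<^sup>2 * (norm (x - zj))\<^sup>2 \<le> D / 4"
  shows "(bubble_base li (norm (x - zi)) * bubble_base lj (norm (x - zj))) powr (n / 2)
           \<le> far_coeff * ((n * b powr (n / 2) * near_layer T (li * norm (x - zi)) + 2 * n * far_layer (li * norm (x - zi)))
                         + (n * b powr (n / 2) * near_layer T (li * norm (x - zj)) + 2 * n * far_layer (li * norm (x - zj))))"
proof -
  define ri rj where "ri = norm (x - zi)" and "rj = norm (x - zj)"
  have r0: "0 \<le> ri" "0 \<le> rj"
    unfolding ri_def rj_def by auto
  have dist: "norm (zi - zj) \<le> ri + rj"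
    unfolding ri_def rj_def using norm_triangle_ineq4[of "x - zj" "x - zi"] by (simp add: norm_minus_commute)
  have bb: "0 < bubble_base li r" "0 < bubble_base lj r" for r
    using bubble_base_pos li_pos lj_pos by auto
  have "1 \<le> 4 * (li\<^sup>2 * rj\<^sup>2)"
    using far D_ge_1 unfolding rj_def by linarith
  then have "bubble_base lj rj \<le> 5 * h * bubble_base li rj"
    unfolding h_def using li_pos lj_pos r0 by (intro bubble_base_rescale_le) auto
  then have "(bubble_base li ri * bubble_base lj rj) powr (n / 2) \<le> (bubble_base li ri * (5 * h * bubble_base li rj)) powr (n / 2)"
    using bb n_ge_1 by (intro powr_mono2 mult_left_mono) (auto intro: less_imp_le)
  also have "\<dots> = (5 * h) powr (n / 2) * (bubble_base li ri * bubble_base li rj) powr (n / 2)"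
    using h_pos bb by (simp add: powr_mult[symmetric] mult_ac)
  also have "\<dots> \<le> (5 * h) powr (n / 2) * (li powr n * ((n * b powr (n / 2) * near_layer T (li * ri) + 2 * n * far_layer (li * ri))
                         + (n * b powr (n / 2) * near_layer T (li * rj) + 2 * n * far_layer (li * rj))))"
    using same_scale_product_le_layers[OF r0 dist] by (rule mult_left_mono) simp
  finally show ?thesis
    unfolding far_coeff_def ri_def rj_def by (simp add: mult.assoc)
qed


lemma eps_eq: "eps = 1 / (h + D / h)"
  unfolding eps_def interaction_base_def h_def D_def using li_pos lj_pos by (simp add: field_simps power2_eq_square)

lemma eps_pos: "0 < eps"
  unfolding eps_eq using h_pos D_ge_1 by (simp add: add_pos_pos)

lemma D_div_h_le: "D / h \<le> 1 / eps"
  unfolding eps_eq using h_pos by simp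

lemma h_div_D_le: "h / D \<le> 2 * eps"
proof -
  have "h * h \<le> 1 * D"
    using h_pos h_le_1 D_ge_1 by (intro mult_mono) auto
  then have "h + D / h \<le> 2 * (D / h)"
    using h_pos by (simp add: field_simps)
  then have "1 / (2 * (D / h)) \<le> 1 / (h + D / h)"
    using h_pos D_ge_1 by (intro divide_left_mono) (auto intro: add_pos_pos)
  then show ?thesis
    unfolding eps_eq using h_pos D_ge_1 by (simp add: field_simps)
qed

lemma D_le: "D \<le> 1 / eps"
proof -
  have "D \<le> D / h"
    using h_pos h_le_1 D_ge_1 by (simp add: field_simps mult_left_le)
  then show ?thesis
    using D_div_h_le by linarith
qed

lemma ln_eps_nonneg: "0 \<le> ln (1 / eps)"
  using D_le D_ge_1 by simp

lemma ln_D_le: "ln D \<le> ln (1 / eps)"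
  using D_le D_ge_1 eps_pos by (subst ln_le_cancel_iff) auto

lemma ln_R_le: "ln R \<le> 1 + ln (1 / eps)"
proof -
  have sqrt_D: "1 \<le> sqrt D" "sqrt D \<le> D"
    using D_ge_1 by (auto simp: real_sqrt_le_iff' power2_eq_square intro: mult_left_mono[of 1 D D, simplified])
  then have "h \<le> sqrt D"
    using h_le_1 by linarith
  then have "1 \<le> sqrt D / h"
    using h_pos by (simp add: field_simps)
  then have "R \<le> 2 * (sqrt D / h)"
    unfolding R_def by auto
  also have "\<dots> \<le> 2 * (D / h)"
    using sqrt_D h_pos by (intro mult_left_mono divide_right_mono) auto
  also have "\<dots> \<le> 2 * (1 / eps)"
    using D_div_h_le by simp
  finally have "ln R \<le> ln (2 * (1 / eps))"
    using R_ge_2 eps_pos by (subst ln_le_cancel_iff) auto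
  also have "\<dots> = ln 2 + ln (1 / eps)"
    using eps_pos by (subst ln_mult) auto
  also have "ln (2::real) \<le> 1"
    using ln_le_minus_one[of 2] by simp
  finally show ?thesis
    by simp
qed

lemma b_powr_le: "b powr (n / 2) \<le> (4 / D) powr (n / 2)"
  using b_pos n_ge_1 D_ge_1 unfolding b_def by (intro powr_mono2) auto

lemma b_powr_ln_T_le: "b powr (n / 2) * ln T \<le> (4 / D) powr (n / 2) * (ln (1 / eps) / 2)"
proof (cases "b = 1")
  case True
  then show ?thesis
    using ln_eps_nonneg D_ge_1 by (simp add: T_def)
next
  case False
  then have b_eq: "b = 4 / D"
    unfolding b_def by (auto simp: min_def split: if_splits)
  have "ln T = ln (D / 4) / 2"
    unfolding T_def b_eq using D_ge_1 by (simp add: ln_powr ln_div) (simp add: field_simps)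
  also have "ln (D / 4) \<le> ln D"
    using D_ge_1 by (subst ln_le_cancel_iff) auto
  finally have "ln T \<le> ln (1 / eps) / 2"
    using ln_D_le by simp
  then show ?thesis
    unfolding b_eq using D_ge_1 by (intro mult_left_mono) auto
qed

lemma near_coeff_le: "near_coeff / lj powr n \<le> 2 * n * (40 powr (n / 2) * eps powr (n / 2))"
proof -
  have "4 * (h / D) \<le> 40 * eps"
    using h_div_D_le eps_pos by linarith
  then have le: "(4 * (h / D)) powr (n / 2) \<le> (40 * eps) powr (n / 2)"
    using h_pos D_ge_1 n_ge_1 by (intro powr_mono2) auto
  have "lj powr n = lj powr (n / 2) * lj powr (n / 2)"
    by (simp add: powr_add[symmetric])
  then have "near_coeff / lj powr n = 2 * n * (4 * li / D / lj) powr (n / 2)"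
    unfolding near_coeff_def using li_pos lj_pos D_ge_1 by (simp add: powr_divide powr_mult)
  also have "4 * li / D / lj = 4 * (h / D)"
    unfolding h_def by simp
  finally show ?thesis
    using le n_ge_1 by (simp add: powr_mult)
qed

lemma far_coeff_le: "far_coeff / li powr n * (4 / D) powr (n / 2) \<le> 40 powr (n / 2) * eps powr (n / 2)"
proof -
  have "far_coeff / li powr n * (4 / D) powr (n / 2) = (20 * (h / D)) powr (n / 2)"
    unfolding far_coeff_def using li_pos h_pos D_ge_1 by (simp add: powr_mult[symmetric])
  also have "\<dots> \<le> (40 * eps) powr (n / 2)"
    using h_div_D_le h_pos D_ge_1 n_ge_1 by (intro powr_mono2) auto
  finally show ?thesis
    by (simp add: powr_mult)
qed

lemma layer_integrals_le:
  assumes om: "0 \<le> \<omega>"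
  shows "near_coeff * (\<omega> / lj powr n * ln R)
           + far_coeff * (n * b powr (n / 2) * (2 * (\<omega> / li powr n * ln T))
                          + 2 * n * (2 * (\<omega> / li powr n * (T powr (-n) / n))))
         \<le> \<omega> * (3 * n + 4) * 40 powr (n / 2) * eps powr (n / 2) * (1 + ln (1 / eps))"
proof -
  define E where "E = 40 powr (n / 2) * eps powr (n / 2)"
  define L where "L = ln (1 / eps)"
  define F where "F = far_coeff / li powr n"
  have E0: "0 \<le> E" and L0: "0 \<le> L" and F0: "0 \<le> F"
    unfolding E_def L_def F_def far_coeff_def using ln_eps_nonneg by auto
  have lnR0: "0 \<le> ln R"
    using R_ge_2 by simp
  have "near_coeff * (\<omega> / lj powr n * ln R) = \<omega> * (near_coeff / lj powr n * ln R)"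
    by (simp add: field_simps)
  also have "\<dots> \<le> \<omega> * (2 * n * E * (1 + L))"
    using near_coeff_le ln_R_le lnR0 E0 n_ge_1 om unfolding E_def L_def
    by (intro mult_left_mono mult_mono) auto
  finally have near: "near_coeff * (\<omega> / lj powr n * ln R) \<le> \<omega> * (2 * n * E * (1 + L))" .
  have "far_coeff * (n * b powr (n / 2) * (2 * (\<omega> / li powr n * ln T)))
          = 2 * n * \<omega> * (F * (b powr (n / 2) * ln T))"
    unfolding F_def using li_pos by (simp add: field_simps)
  also have "\<dots> \<le> 2 * n * \<omega> * (F * ((4 / D) powr (n / 2) * (L / 2)))"
    using b_powr_ln_T_le F0 n_ge_1 om unfolding L_def by (intro mult_left_mono) auto
  also have "\<dots> \<le> 2 * n * \<omega> * (E * (L / 2))"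
  proof -
    have "F * (4 / D) powr (n / 2) * (L / 2) \<le> E * (L / 2)"
      using far_coeff_le L0 unfolding E_def F_def by (intro mult_right_mono) auto
    then show ?thesis
      using n_ge_1 om by (intro mult_left_mono) (auto simp: mult.assoc)
  qed
  finally have log: "far_coeff * (n * b powr (n / 2) * (2 * (\<omega> / li powr n * ln T))) \<le> 2 * n * \<omega> * (E * (L / 2))" .
  have "far_coeff * (2 * n * (2 * (\<omega> / li powr n * (T powr (-n) / n)))) = 4 * \<omega> * (F * b powr (n / 2))"
    unfolding F_def T_powr using li_pos n_ge_1 by (simp add: field_simps)
  also have "\<dots> \<le> 4 * \<omega> * (F * (4 / D) powr (n / 2))"
    using b_powr_le F0 om by (intro mult_left_mono) auto
  also have "\<dots> \<le> 4 * \<omega> * E"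
    using far_coeff_le om unfolding E_def F_def by (intro mult_left_mono) auto
  finally have tail: "far_coeff * (2 * n * (2 * (\<omega> / li powr n * (T powr (-n) / n)))) \<le> 4 * \<omega> * E" .
  have "\<omega> * (2 * n * E * (1 + L)) + 2 * n * \<omega> * (E * (L / 2)) + 4 * \<omega> * E \<le> \<omega> * E * ((3 * n + 4) * (1 + L))"
  proof -
    have "2 * n * (1 + L) + n * L + 4 \<le> (3 * n + 4) * (1 + L)"
      using L0 n_ge_1 by (simp add: algebra_simps)
    moreover have "0 \<le> \<omega> * E"
      using om E0 by simp
    ultimately have "\<omega> * E * (2 * n * (1 + L) + n * L + 4) \<le> \<omega> * E * ((3 * n + 4) * (1 + L))"
      by (rule mult_left_mono)
    then show ?thesis
      by (simp add: algebra_simps)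
  qed
  moreover have "\<omega> * E * ((3 * n + 4) * (1 + L))
                   = \<omega> * (3 * n + 4) * 40 powr (n / 2) * eps powr (n / 2) * (1 + ln (1 / eps))"
    unfolding E_def L_def by (simp add: mult_ac)
  ultimately show ?thesis
    using near log tail by (simp only: distrib_left)
qed

lemma product_le_layers:
  "(bubble_base li (norm (x - zi)) * bubble_base lj (norm (x - zj))) powr (n / 2)
     \<le> near_coeff * near_layer R (lj * norm (x - zj))
        + far_coeff * (n * b powr (n / 2) * (near_layer T (li * norm (x - zi)) + near_layer T (li * norm (x - zj)))
                       + 2 * n * (far_layer (li * norm (x - zi)) + far_layer (li * norm (x - zj))))"
proof -
  have near0: "0 \<le> near_coeff * near_layer R (lj * norm (x - zj))"
    unfolding near_coeff_def using near_layer_nonneg R_ge_2 n_ge_1 by simp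
  have far0: "0 \<le> far_coeff * (n * b powr (n / 2) * (near_layer T (li * norm (x - zi)) + near_layer T (li * norm (x - zj)))
                       + 2 * n * (far_layer (li * norm (x - zi)) + far_layer (li * norm (x - zj))))"
    unfolding far_coeff_def using near_layer_nonneg[OF T_ge_1] far_layer_nonneg n_ge_1 h_pos by simp
  show ?thesis
  proof (cases "li\<^sup>2 * (norm (x - zj))\<^sup>2 \<le> D / 4")
    case True
    with product_le_near_layer far0 show ?thesis
      by (smt (verit))
  next
    case False
    with product_le_far_layers near0 show ?thesis
      by (smt (verit) distrib_left)
  qed
qed

lemma ennreal_near_layer:
  assumes "1 \<le> r"
  shows "ennreal (near_layer r (l * norm (x - c)))
           = ball_superposition (\<lambda>t. indicator {1..r} t * t powr (-n - 1)) l c x"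
  by (subst ball_superposition_powr_Icc) (use assms n_ge_1 in \<open>auto simp: near_layer_def\<close>)

lemma ennreal_far_layer:
  "ennreal (far_layer (l * norm (x - c)))
     = ball_superposition (\<lambda>t. indicator {T..} t * t powr (-(2 * n) - 1)) l c x"
  by (subst ball_superposition_powr_Ici) (use T_ge_1 n_ge_1 in \<open>auto simp: far_layer_def\<close>)

lemma nn_integral_near_layer:
  fixes c :: 'a
  assumes n: "n = real DIM('a)" and l: "0 < l" and r: "1 \<le> r"
  shows "(\<integral>\<^sup>+x. ennreal (near_layer r (l * norm (x - c))) \<partial>lborel) = ennreal (unit_ball_vol n / l powr n * ln r)"
proof -
  have "(\<integral>\<^sup>+x. ennreal (near_layer r (l * norm (x - c))) \<partial>lborel)
          = ennreal (unit_ball_vol n / l powr n)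
            * (\<integral>\<^sup>+t. ennreal (indicator {1..r} t * t powr (-n - 1) * t ^ DIM('a)) \<partial>lborel)"
    unfolding ennreal_near_layer[OF r] using l
    by (subst nn_integral_ball_superposition) (auto simp: n powr_realpow)
  also have "(\<integral>\<^sup>+t. ennreal (indicator {1..r} t * t powr (-n - 1) * t ^ DIM('a)) \<partial>lborel) = ennreal (ln r)"
    using nn_integral_powr_Icc_moment[of 1 r "DIM('a)"] r by (simp add: n[symmetric])
  finally show ?thesis
    using l r n_ge_1 by (simp add: ennreal_mult[symmetric])
qed

lemma nn_integral_far_layer:
  fixes c :: 'a
  assumes n: "n = real DIM('a)" and l: "0 < l"
  shows "(\<integral>\<^sup>+x. ennreal (far_layer (l * norm (x - c))) \<partial>lborel) = ennreal (unit_ball_vol n / l powr n * (T powr (-n) / n))"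
proof -
  have "(\<integral>\<^sup>+x. ennreal (far_layer (l * norm (x - c))) \<partial>lborel)
          = ennreal (unit_ball_vol n / l powr n)
            * (\<integral>\<^sup>+t. ennreal (indicator {T..} t * t powr (-(2 * n) - 1) * t ^ DIM('a)) \<partial>lborel)"
    unfolding ennreal_far_layer using l T_ge_1
    by (subst nn_integral_ball_superposition) (auto simp: n powr_realpow)
  also have "(\<integral>\<^sup>+t. ennreal (indicator {T..} t * t powr (-(2 * n) - 1) * t ^ DIM('a)) \<partial>lborel) = ennreal (T powr (-n) / n)"
    using nn_integral_powr_Ici_moment[where a = T and s = "2 * n" and N = "DIM('a)"] T_ge_1 n_ge_1 by (simp add: n[symmetric])
  finally show ?thesis
    using l n_ge_1 by (simp add: ennreal_mult[symmetric])
qed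

lemma borel_measurable_near_layer[measurable]:
  "(\<lambda>x::'a. near_layer r (l * norm (x - c))) \<in> borel_measurable borel"
  unfolding near_layer_def by measurable

lemma borel_measurable_far_layer[measurable]:
  "(\<lambda>x::'a. far_layer (l * norm (x - c))) \<in> borel_measurable borel"
  unfolding far_layer_def by measurable

lemma nn_integral_product_le:
  assumes n: "n = real DIM('a)"
  shows "(\<integral>\<^sup>+x. ennreal ((bubble_base li (norm (x - zi)) * bubble_base lj (norm (x - zj))) powr (n / 2)) \<partial>lborel)
           \<le> ennreal (unit_ball_vol n * (3 * n + 4) * 40 powr (n / 2) * eps powr (n / 2) * (1 + ln (1 / eps)))"
proof -
  define IN where "IN = unit_ball_vol n / lj powr n * ln R"
  define IT where "IT = unit_ball_vol n / li powr n * ln T"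
  define IF where "IF = unit_ball_vol n / li powr n * (T powr (-n) / n)"
  define cT cF where "cT = far_coeff * (n * b powr (n / 2))" and "cF = far_coeff * (2 * n)"
  define N where "N x = near_layer R (lj * norm (x - zj))" for x :: 'a
  define Ti Tj where "Ti x = near_layer T (li * norm (x - zi))" and "Tj x = near_layer T (li * norm (x - zj))" for x :: 'a
  define Fi Fj where "Fi x = far_layer (li * norm (x - zi))" and "Fj x = far_layer (li * norm (x - zj))" for x :: 'a
  have coeff0: "0 \<le> near_coeff" "0 \<le> cT" "0 \<le> cF"
    unfolding near_coeff_def cT_def cF_def far_coeff_def using n_ge_1 h_pos by auto
  have layer0: "0 \<le> N x" "0 \<le> Ti x" "0 \<le> Tj x" "0 \<le> Fi x" "0 \<le> Fj x" for x
    unfolding N_def Ti_def Tj_def Fi_def Fj_def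
    using near_layer_nonneg R_ge_2 T_ge_1 far_layer_nonneg by auto
  have [measurable]: "N \<in> borel_measurable borel" "Ti \<in> borel_measurable borel" "Tj \<in> borel_measurable borel"
    "Fi \<in> borel_measurable borel" "Fj \<in> borel_measurable borel"
    unfolding N_def[abs_def] Ti_def[abs_def] Tj_def[abs_def] Fi_def[abs_def] Fj_def[abs_def] by measurable
  have "(\<integral>\<^sup>+x. ennreal ((bubble_base li (norm (x - zi)) * bubble_base lj (norm (x - zj))) powr (n / 2)) \<partial>lborel)
          \<le> (\<integral>\<^sup>+x. ennreal near_coeff * ennreal (N x) + ennreal cT * (ennreal (Ti x) + ennreal (Tj x))
                    + ennreal cF * (ennreal (Fi x) + ennreal (Fj x)) \<partial>lborel)"
  proof (rule nn_integral_mono)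
    fix x :: 'a
    have "ennreal ((bubble_base li (norm (x - zi)) * bubble_base lj (norm (x - zj))) powr (n / 2))
            \<le> ennreal (near_coeff * N x + cT * (Ti x + Tj x) + cF * (Fi x + Fj x))"
      using product_le_layers[of x] unfolding N_def Ti_def Tj_def Fi_def Fj_def cT_def cF_def
      by (intro ennreal_leI) (simp add: algebra_simps)
    also have "\<dots> = ennreal near_coeff * ennreal (N x) + ennreal cT * (ennreal (Ti x) + ennreal (Tj x))
                    + ennreal cF * (ennreal (Fi x) + ennreal (Fj x))"
      using coeff0 layer0 by (simp add: ennreal_mult)
    finally show "ennreal ((bubble_base li (norm (x - zi)) * bubble_base lj (norm (x - zj))) powr (n / 2))
            \<le> ennreal near_coeff * ennreal (N x) + ennreal cT * (ennreal (Ti x) + ennreal (Tj x))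
                    + ennreal cF * (ennreal (Fi x) + ennreal (Fj x))" .
  qed
  also have "\<dots> = ennreal near_coeff * (\<integral>\<^sup>+x. N x \<partial>lborel)
                  + ennreal cT * ((\<integral>\<^sup>+x. Ti x \<partial>lborel) + (\<integral>\<^sup>+x. Tj x \<partial>lborel))
                  + ennreal cF * ((\<integral>\<^sup>+x. Fi x \<partial>lborel) + (\<integral>\<^sup>+x. Fj x \<partial>lborel))"
    by (simp add: nn_integral_add nn_integral_cmult)
  also have "\<dots> = ennreal (near_coeff * IN + cT * (2 * IT) + cF * (2 * IF))"
  proof -
    have "(\<integral>\<^sup>+x. N x \<partial>lborel) = ennreal IN"
      "(\<integral>\<^sup>+x. Ti x \<partial>lborel) = ennreal IT" "(\<integral>\<^sup>+x. Tj x \<partial>lborel) = ennreal IT"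
      "(\<integral>\<^sup>+x. Fi x \<partial>lborel) = ennreal IF" "(\<integral>\<^sup>+x. Fj x \<partial>lborel) = ennreal IF"
      unfolding N_def Ti_def Tj_def Fi_def Fj_def IN_def IT_def IF_def
      using nn_integral_near_layer[OF n] nn_integral_far_layer[OF n] li_pos lj_pos R_ge_2 T_ge_1 by auto
    moreover have "0 \<le> IN" "0 \<le> IT" "0 \<le> IF"
      unfolding IN_def IT_def IF_def using R_ge_2 T_ge_1 n_ge_1 by auto
    ultimately show ?thesis
      using coeff0 by (simp add: ennreal_mult mult_2[where 'a = ennreal])
  qed
  also have "\<dots> \<le> ennreal (unit_ball_vol n * (3 * n + 4) * 40 powr (n / 2) * eps powr (n / 2) * (1 + ln (1 / eps)))"
    using layer_integrals_le[of "unit_ball_vol n"] n_ge_1 unfolding IN_def IT_def IF_def cT_def cF_def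
    by (intro ennreal_leI) (simp add: algebra_simps)
  finally show ?thesis .
qed

end


lemma qint_eq_powr:
  "qint zi li zj lj = interaction_base zi li zj lj powr (- ((real DIM('a) - 2) / 2))"
  for zi zj :: "'a::euclidean_space"
  unfolding qint_def interaction_base_def by (simp add: minus_divide_left)

lemma qint_pos:
  fixes zi zj :: "'a::euclidean_space"
  assumes "0 < li" "0 < lj"
  shows "0 < qint zi li zj lj"
  using interaction_base_ge_2[OF assms, of zi zj] unfolding qint_eq_powr by simp

lemma qint_le_1:
  fixes zi zj :: "'a::euclidean_space"
  assumes "0 < li" "0 < lj" "2 \<le> DIM('a)"
  shows "qint zi li zj lj \<le> 1"
  using interaction_base_ge_2[OF assms(1,2), of zi zj] assms(3)
  unfolding qint_eq_powr by (simp add: powr_minus inverse_le_1_iff ge_one_powr_ge_zero)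

lemma nn_integral_bubble_base_product_le_ordered:
  fixes zi zj :: "'a::euclidean_space"
  assumes "0 < li" "li \<le> lj"
  shows "(\<integral>\<^sup>+x. ennreal ((bubble_base li (norm (x - zi)) * bubble_base lj (norm (x - zj))) powr (real DIM('a) / 2)) \<partial>lborel)
           \<le> ennreal (unit_ball_vol DIM('a) * (3 * real DIM('a) + 4) * 40 powr (DIM('a) / 2)
                       * (1 / interaction_base zi li zj lj) powr (DIM('a) / 2) * (1 + ln (interaction_base zi li zj lj)))"
proof -
  interpret bubble_pair zi zj li lj "real DIM('a)"
    using assms by unfold_locales auto
  show ?thesis
    using nn_integral_product_le[OF refl] unfolding eps_def by simp
qed

lemma nn_integral_bubble_base_product_le_interaction:
  fixes zi zj :: "'a::euclidean_space"
  assumes "0 < li" "0 < lj"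
  shows "(\<integral>\<^sup>+x. ennreal ((bubble_base li (norm (x - zi)) * bubble_base lj (norm (x - zj))) powr (real DIM('a) / 2)) \<partial>lborel)
           \<le> ennreal (unit_ball_vol DIM('a) * (3 * real DIM('a) + 4) * 40 powr (DIM('a) / 2)
                       * (1 / interaction_base zi li zj lj) powr (DIM('a) / 2) * (1 + ln (interaction_base zi li zj lj)))"
proof (cases "li \<le> lj")
  case True
  then show ?thesis
    using nn_integral_bubble_base_product_le_ordered assms by blast
next
  case False
  have "(\<integral>\<^sup>+x. ennreal ((bubble_base lj (norm (x - zj)) * bubble_base li (norm (x - zi))) powr (real DIM('a) / 2)) \<partial>lborel)
          = (\<integral>\<^sup>+x. ennreal ((bubble_base li (norm (x - zi)) * bubble_base lj (norm (x - zj))) powr (real DIM('a) / 2)) \<partial>lborel)"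
    by (simp add: mult.commute)
  moreover have "interaction_base zj lj zi li = interaction_base zi li zj lj"
    by (rule interaction_base_commute)
  ultimately show ?thesis
    using nn_integral_bubble_base_product_le_ordered[of lj li zj zi] False assms by simp
qed

lemma interaction_bound_le_qint:
  fixes zi zj :: "'a::euclidean_space"
  assumes li: "0 < li" and lj: "0 < lj" and dim: "4 \<le> DIM('a)"
  defines "S \<equiv> interaction_base zi li zj lj" and "q \<equiv> qint zi li zj lj"
  shows "(1 / S) powr (DIM('a) / 2) * (1 + ln S) \<le> q powr (DIM('a) / (real DIM('a) - 2)) * (1 + ln (1 / q))"
proof -
  define n where "n = real DIM('a)"
  have n4: "4 \<le> n"
    unfolding n_def using dim by simp
  have S2: "2 \<le> S"
    unfolding S_def using interaction_base_ge_2[OF li lj] .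
  have q: "q = S powr (- ((n - 2) / 2))"
    unfolding q_def S_def n_def by (rule qint_eq_powr)
  have "q powr (n / (n - 2)) = S powr (- ((n - 2) / 2) * (n / (n - 2)))"
    unfolding q by (rule powr_powr)
  also have "- ((n - 2) / 2) * (n / (n - 2)) = - (n / 2)"
    using n4 by (simp add: field_simps)
  also have "S powr (- (n / 2)) = (1 / S) powr (n / 2)"
    using S2 by (simp add: powr_minus_divide powr_divide)
  finally have "(1 / S) powr (n / 2) = q powr (n / (n - 2))" ..
  moreover have "1 + ln S \<le> 1 + ln (1 / q)"
  proof -
    have "1 / q = S powr ((n - 2) / 2)"
      unfolding q using S2 by (simp add: powr_minus_divide)
    then have "ln (1 / q) = (n - 2) / 2 * ln S"
      using S2 by (simp add: ln_powr)
    moreover have "1 * ln S \<le> (n - 2) / 2 * ln S"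
      using S2 n4 by (intro mult_right_mono) auto
    ultimately show ?thesis
      by simp
  qed
  ultimately show ?thesis
    unfolding n_def by (metis mult_left_mono powr_ge_zero)
qed

lemma powr_mult_one_plus_ln_inverse_mono:
  fixes q Q p :: real
  assumes "0 < q" "q \<le> Q" "Q \<le> 1" "1 \<le> p"
  shows "q powr p * (1 + ln (1 / q)) \<le> Q powr p * (1 + ln (1 / Q))"
proof -
  define t where "t = Q / q"
  have Q: "0 < Q"
    using assms by simp
  have t1: "1 \<le> t"
    unfolding t_def using assms by simp
  have lnq: "ln (1 / q) = ln t + ln (1 / Q)"
  proof -
    have "ln (t * (1 / Q)) = ln t + ln (1 / Q)"
      using t1 Q by (intro ln_mult_pos) auto
    moreover have "1 / q = t * (1 / Q)"
      unfolding t_def using assms Q by simp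
    ultimately show ?thesis
      by (simp only:)
  qed
  have Qp: "Q powr p = t powr p * q powr p"
    unfolding t_def using assms by (simp add: powr_divide)
  have L0: "0 \<le> ln (1 / Q)"
    using assms Q by simp
  have "1 + ln t \<le> t"
    using ln_le_minus_one[of t] t1 by simp
  also have "t = t powr 1"
    using t1 by simp
  also have "\<dots> \<le> t powr p"
    using t1 assms(4) by (intro powr_mono) auto
  finally have "1 + ln t \<le> t powr p" .
  then have "(1 + ln t) * (1 + ln (1 / Q)) \<le> t powr p * (1 + ln (1 / Q))"
    using L0 by (intro mult_right_mono) auto
  moreover have "1 + (ln t + ln (1 / Q)) \<le> (1 + ln t) * (1 + ln (1 / Q))"
    using t1 L0 by (simp add: algebra_simps)
  ultimately have "1 + (ln t + ln (1 / Q)) \<le> t powr p * (1 + ln (1 / Q))"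
    by linarith
  then have "q powr p * (1 + (ln t + ln (1 / Q))) \<le> q powr p * (t powr p * (1 + ln (1 / Q)))"
    by (intro mult_left_mono) auto
  then show ?thesis
    unfolding lnq Qp by (simp add: mult_ac)
qed

lemma powr_mult_one_plus_ln_inverse_le:
  fixes Q a :: real
  assumes "0 < Q" "Q \<le> 1" "0 < a"
  shows "Q powr a * (1 + ln (1 / Q)) \<le> 1 + 1 / a"
proof -
  have Qa: "Q powr a \<le> 1"
    using assms by (intro powr_le1) auto
  have "a * ln (1 / Q) = ln ((1 / Q) powr a)"
    using assms by (simp add: ln_powr)
  also have "\<dots> \<le> (1 / Q) powr a"
    using ln_le_minus_one[of "(1 / Q) powr a"] assms by simp
  finally have "ln (1 / Q) \<le> (1 / Q) powr a / a"
    using assms by (simp add: field_simps)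
  then have "Q powr a * ln (1 / Q) \<le> Q powr a * ((1 / Q) powr a / a)"
    by (intro mult_left_mono) auto
  also have "\<dots> = (Q * (1 / Q)) powr a / a"
    using assms by (simp only: powr_mult) simp
  also have "\<dots> = 1 / a"
    using assms by simp
  finally show ?thesis
    using Qa by (simp add: distrib_left)
qed

lemma nn_integral_bubble_base_product_le:
  fixes zi zj :: "'a::euclidean_space"
  assumes li: "0 < li" and lj: "0 < lj" and dim: "4 \<le> DIM('a)"
    and Q: "qint zi li zj lj \<le> Q" "Q \<le> 1"
  shows "(\<integral>\<^sup>+x. ennreal ((bubble_base li (norm (x - zi)) * bubble_base lj (norm (x - zj))) powr (real DIM('a) / 2)) \<partial>lborel)
           \<le> ennreal (unit_ball_vol DIM('a) * (3 * real DIM('a) + 4) * 40 powr (DIM('a) / 2)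
                       * (Q powr (DIM('a) / (real DIM('a) - 2)) * (1 + ln (1 / Q))))"
proof -
  define P where "P = unit_ball_vol DIM('a) * (3 * real DIM('a) + 4) * 40 powr (DIM('a) / 2)"
  define S where "S = interaction_base zi li zj lj"
  have "1 \<le> real DIM('a) / (real DIM('a) - 2)"
    using dim by simp
  then have "(1 / S) powr (DIM('a) / 2) * (1 + ln S) \<le> Q powr (DIM('a) / (real DIM('a) - 2)) * (1 + ln (1 / Q))"
    using interaction_bound_le_qint[OF li lj dim, of zi zj] powr_mult_one_plus_ln_inverse_mono[OF qint_pos[OF li lj] Q]
    unfolding S_def by (meson order_trans)
  then have "P * (1 / S) powr (DIM('a) / 2) * (1 + ln S) \<le> P * (Q powr (DIM('a) / (real DIM('a) - 2)) * (1 + ln (1 / Q)))"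
    unfolding P_def by (simp add: mult.assoc mult_left_mono)
  then have "ennreal (P * (1 / S) powr (DIM('a) / 2) * (1 + ln S))
               \<le> ennreal (P * (Q powr (DIM('a) / (real DIM('a) - 2)) * (1 + ln (1 / Q))))"
    by (rule ennreal_leI)
  with nn_integral_bubble_base_product_le_interaction[OF li lj, of zi zj] show ?thesis
    unfolding P_def S_def by (rule order_trans)
qed

lemma powr_mult_le_pair_products:
  fixes w1 w2 w3 m :: real
  assumes w: "0 < w1" "0 < w2" "0 < w3" and m: "1 \<le> m"
  shows "w1 powr 2 * w2 powr m * w3 powr m \<le> (w1 * w2) powr (m + 1) + (w1 * w3) powr (m + 1) + (w2 * w3) powr (m + 1)"
proof -
  have nonneg: "0 \<le> (w1 * w2) powr (m + 1)" "0 \<le> (w1 * w3) powr (m + 1)" "0 \<le> (w2 * w3) powr (m + 1)"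
    by auto
  have sq: "w1 powr 2 = w1 * w1"
    using w by (simp add: powr_realpow power2_eq_square)
  have split: "x powr m = x powr (m - 1) * x" if "0 < x" for x
  proof -
    have "x powr (m - 1) * x = x powr (m - 1) * x powr 1"
      using that by simp
    also have "\<dots> = x powr (m - 1 + 1)"
      by (rule powr_add[symmetric])
    finally show ?thesis
      by simp
  qed
  have succ: "x powr (m + 1) = x powr m * x" if "0 < x" for x
    using that by (simp add: powr_add)
  consider "w1 \<le> w2 \<and> w1 \<le> w3" | "w2 \<le> w1 \<and> w2 \<le> w3" | "w3 \<le> w1 \<and> w3 \<le> w2"
    by linarith
  then show ?thesis
  proof cases
    case 1
    have "w1 * w1 \<le> w2 * w3"
      using 1 w by (intro mult_mono) auto
    then have "(w1 * w1) * (w2 powr m * w3 powr m) \<le> (w2 * w3) * (w2 powr m * w3 powr m)"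
      by (rule mult_right_mono) simp
    then have "w1 powr 2 * w2 powr m * w3 powr m \<le> (w2 * w3) * (w2 powr m * w3 powr m)"
      unfolding sq by (simp only: mult.assoc)
    also have "\<dots> = (w2 * w3) powr (m + 1)"
      using w by (simp add: succ powr_mult mult_ac)
    finally show ?thesis
      using nonneg by linarith
  next
    case 2
    have "w2 powr (m - 1) * w2 \<le> w1 powr (m - 1) * w3"
      using 2 w m by (intro mult_mono powr_mono2) auto
    then have "w1 powr 2 * w2 powr m * w3 powr m \<le> w1 powr 2 * (w1 powr (m - 1) * w3) * w3 powr m"
      using split[OF w(2)] by (intro mult_right_mono mult_left_mono) auto
    also have "\<dots> = (w1 * w3) powr (m + 1)"
      using w unfolding sq by (simp add: split[OF w(1)] succ powr_mult mult_ac)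
    finally show ?thesis
      using nonneg by linarith
  next
    case 3
    have "w3 powr (m - 1) * w3 \<le> w1 powr (m - 1) * w2"
      using 3 w m by (intro mult_mono powr_mono2) auto
    then have "w1 powr 2 * w2 powr m * w3 powr m \<le> w1 powr 2 * w2 powr m * (w1 powr (m - 1) * w2)"
      using split[OF w(3)] by (intro mult_left_mono) auto
    also have "\<dots> = (w1 * w2) powr (m + 1)"
      using w unfolding sq by (simp add: split[OF w(1)] succ powr_mult mult_ac)
    finally show ?thesis
      using nonneg by linarith
  qed
qed

lemma bubble_triple_le_pair_products:
  fixes z1 z2 z3 x :: "'a::euclidean_space"
  assumes l: "0 < l1" "0 < l2" "0 < l3" and dim: "4 \<le> DIM('a)"
  defines "c \<equiv> (real DIM('a) * (real DIM('a) - 2)) powr ((real DIM('a) - 2) / 4)"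
  shows "bubble z1 l1 x powr (crit_exp TYPE('a) - 1) * bubble z2 l2 x * bubble z3 l3 x
           \<le> c powr (crit_exp TYPE('a) - 1) * c * c
              * ((bubble_base l1 (norm (x - z1)) * bubble_base l2 (norm (x - z2))) powr (real DIM('a) / 2)
                 + (bubble_base l1 (norm (x - z1)) * bubble_base l3 (norm (x - z3))) powr (real DIM('a) / 2)
                 + (bubble_base l2 (norm (x - z2)) * bubble_base l3 (norm (x - z3))) powr (real DIM('a) / 2))"
proof -
  define n where "n = real DIM('a)"
  define m where "m = (n - 2) / 2"
  define w1 w2 w3 where "w1 = bubble_base l1 (norm (x - z1))" and "w2 = bubble_base l2 (norm (x - z2))"
    and "w3 = bubble_base l3 (norm (x - z3))"
  have w: "0 < w1" "0 < w2" "0 < w3"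
    unfolding w1_def w2_def w3_def using l by (auto intro: bubble_base_pos)
  have m1: "1 \<le> m"
    unfolding m_def n_def using dim by simp
  have "m * (crit_exp TYPE('a) - 1) = 2"
    unfolding m_def n_def crit_exp_def using dim by (simp add: field_simps)
  then have "bubble z1 l1 x powr (crit_exp TYPE('a) - 1) = c powr (crit_exp TYPE('a) - 1) * w1 powr 2"
    unfolding bubble_eq_bubble_base c_def w1_def m_def n_def by (simp add: powr_mult powr_powr)
  then have "bubble z1 l1 x powr (crit_exp TYPE('a) - 1) * bubble z2 l2 x * bubble z3 l3 x
               = c powr (crit_exp TYPE('a) - 1) * c * c * (w1 powr 2 * w2 powr m * w3 powr m)"
    by (simp add: bubble_eq_bubble_base c_def w2_def w3_def m_def n_def mult_ac)
  also have "\<dots> \<le> c powr (crit_exp TYPE('a) - 1) * c * c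
                   * ((w1 * w2) powr (m + 1) + (w1 * w3) powr (m + 1) + (w2 * w3) powr (m + 1))"
    using powr_mult_le_pair_products[OF w m1] unfolding c_def by (intro mult_left_mono) auto
  also have "m + 1 = real DIM('a) / 2"
    unfolding m_def n_def by (simp add: field_simps)
  finally show ?thesis
    unfolding w1_def w2_def w3_def .
qed

definition triple_constant :: "'a::euclidean_space itself \<Rightarrow> real" where
  "triple_constant _ =
     (let n = real DIM('a); c = (n * (n - 2)) powr ((n - 2) / 4)
      in 3 * (c powr (crit_exp TYPE('a) - 1) * c * c) * (unit_ball_vol n * (3 * n + 4) * 40 powr (n / 2)))"

lemma triple_constant_pos: "4 \<le> DIM('a::euclidean_space) \<Longrightarrow> 0 < triple_constant TYPE('a)"
  unfolding triple_constant_def Let_def by simp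

lemma nn_integral_bubble_triple_le:
  fixes z1 z2 z3 :: "'a::euclidean_space"
  assumes l: "0 < l1" "0 < l2" "0 < l3" and dim: "4 \<le> DIM('a)"
  defines "Q \<equiv> max (qint z1 l1 z2 l2) (max (qint z1 l1 z3 l3) (qint z2 l2 z3 l3))"
  shows "(\<integral>\<^sup>+x. ennreal (bubble z1 l1 x powr (crit_exp TYPE('a) - 1) * bubble z2 l2 x * bubble z3 l3 x) \<partial>lborel)
           \<le> ennreal (triple_constant TYPE('a) * (Q powr (real DIM('a) / (real DIM('a) - 2)) * (1 + ln (1 / Q))))"
proof -
  define n where "n = real DIM('a)"
  define c where "c = (n * (n - 2)) powr ((n - 2) / 4)"
  define K where "K = c powr (crit_exp TYPE('a) - 1) * c * c"
  define B where "B = unit_ball_vol n * (3 * n + 4) * 40 powr (n / 2) * (Q powr (n / (n - 2)) * (1 + ln (1 / Q)))"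
  define pair where "pair l z l' z' x = ennreal ((bubble_base l (norm (x - z)) * bubble_base l' (norm (x - z'))) powr (n / 2))"
    for l l' and z z' x :: 'a
  have K: "0 < K"
    unfolding K_def c_def n_def using dim by simp
  have "qint z1 l1 z2 l2 \<le> 1" "qint z1 l1 z3 l3 \<le> 1" "qint z2 l2 z3 l3 \<le> 1"
    using l dim by (auto intro!: qint_le_1)
  then have Q1: "Q \<le> 1"
    unfolding Q_def by simp
  have pair_le: "(\<integral>\<^sup>+x. pair l z l' z' x \<partial>lborel) \<le> ennreal B"
    if "0 < l" "0 < l'" "qint z l z' l' \<le> Q" for z z' :: 'a and l l'
    using nn_integral_bubble_base_product_le[OF that(1,2) dim that(3) Q1]
    unfolding pair_def B_def n_def .
  have "(\<integral>\<^sup>+x. ennreal (bubble z1 l1 x powr (crit_exp TYPE('a) - 1) * bubble z2 l2 x * bubble z3 l3 x) \<partial>lborel)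
          \<le> (\<integral>\<^sup>+x. ennreal K * (pair l1 z1 l2 z2 x + pair l1 z1 l3 z3 x + pair l2 z2 l3 z3 x) \<partial>lborel)"
  proof (rule nn_integral_mono)
    fix x :: 'a
    define p where "p l z l' z' = (bubble_base l (norm (x - z)) * bubble_base l' (norm (x - z'))) powr (n / 2)"
      for l l' and z z' :: 'a
    have "ennreal (bubble z1 l1 x powr (crit_exp TYPE('a) - 1) * bubble z2 l2 x * bubble z3 l3 x)
            \<le> ennreal (K * (p l1 z1 l2 z2 + p l1 z1 l3 z3 + p l2 z2 l3 z3))"
      using bubble_triple_le_pair_products[OF l dim, of z1 x z2 z3]
      unfolding K_def c_def n_def p_def by (rule ennreal_leI)
    also have "\<dots> = ennreal K * (pair l1 z1 l2 z2 x + pair l1 z1 l3 z3 x + pair l2 z2 l3 z3 x)"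
      using K by (simp add: p_def pair_def ennreal_mult)
    finally show "ennreal (bubble z1 l1 x powr (crit_exp TYPE('a) - 1) * bubble z2 l2 x * bubble z3 l3 x)
            \<le> ennreal K * (pair l1 z1 l2 z2 x + pair l1 z1 l3 z3 x + pair l2 z2 l3 z3 x)" .
  qed
  also have "\<dots> = ennreal K * ((\<integral>\<^sup>+x. pair l1 z1 l2 z2 x \<partial>lborel) + (\<integral>\<^sup>+x. pair l1 z1 l3 z3 x \<partial>lborel)
                                + (\<integral>\<^sup>+x. pair l2 z2 l3 z3 x \<partial>lborel))"
    unfolding pair_def by (simp add: nn_integral_cmult nn_integral_add)
  also have "\<dots> \<le> ennreal K * (ennreal B + ennreal B + ennreal B)"
    using pair_le[OF l(1) l(2)] pair_le[OF l(1) l(3)] pair_le[OF l(2) l(3)]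
    by (intro mult_left_mono add_mono) (auto simp: Q_def)
  also have "\<dots> = ennreal (3 * K * B)"
  proof -
    have "0 < Q"
      unfolding Q_def using qint_pos[OF l(1) l(2), of z1 z2] by simp
    then have "0 \<le> B"
      using Q1 dim unfolding B_def n_def by simp
    then show ?thesis
      using K by (simp add: ennreal_mult[symmetric] ennreal_plus[symmetric] del: ennreal_plus)
  qed
  also have "3 * K * B = triple_constant TYPE('a) * (Q powr (real DIM('a) / (real DIM('a) - 2)) * (1 + ln (1 / Q)))"
    unfolding triple_constant_def Let_def B_def K_def c_def n_def by (simp only: mult.assoc)
  finally show ?thesis .
qed

lemma bubble_powr_crit_exp_dim6:
  fixes z x :: "'a::euclidean_space"
  assumes "DIM('a) = 6"
  shows "bubble z l x powr (crit_exp TYPE('a) - 1) = bubble z l x"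
proof -
  have "crit_exp TYPE('a) - 1 = 1"
    unfolding crit_exp_def assms by simp
  moreover have "0 \<le> bubble z l x"
    unfolding bubble_def by simp
  ultimately show ?thesis
    by simp
qed

lemma one_plus_ln_inverse_le_twice:
  fixes Q :: real
  assumes "0 < Q" "Q \<le> exp (-1)"
  shows "1 + ln (1 / Q) \<le> 2 * ln (1 / Q)"
proof -
  have "ln Q \<le> -1"
    using assms by (metis ln_exp ln_le_cancel_iff exp_gt_zero)
  then show ?thesis
    using assms by (simp add: ln_div)
qed

lemma powr_mult_one_plus_ln_inverse_le_ln_powr:
  fixes Q n :: real
  assumes Q: "0 < Q" "Q \<le> exp (-1)" and n: "5 \<le> n"
  shows "Q powr (n / (n - 2)) * (1 + ln (1 / Q)) \<le> (n - 1) * (Q powr ((n - 1) / (n - 2)) * \<bar>ln Q\<bar> powr ((n - 5) / n))"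
proof -
  have Q1: "Q \<le> 1"
    using Q by (smt (verit) exp_le_one_iff)
  have L: "1 \<le> \<bar>ln Q\<bar>"
    using one_plus_ln_inverse_le_twice[OF Q] Q by (simp add: ln_div)
  have "Q powr (n / (n - 2)) = Q powr ((n - 1) / (n - 2)) * Q powr (1 / (n - 2))"
    using n by (simp add: powr_add[symmetric] add_divide_distrib[symmetric])
  moreover have "Q powr (1 / (n - 2)) * (1 + ln (1 / Q)) \<le> (n - 1) * \<bar>ln Q\<bar> powr ((n - 5) / n)"
  proof -
    have "Q powr (1 / (n - 2)) * (1 + ln (1 / Q)) \<le> 1 + 1 / (1 / (n - 2))"
      using n by (intro powr_mult_one_plus_ln_inverse_le Q(1) Q1) simp
    also have "\<dots> = (n - 1) * 1"
      using n by simp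
    also have "\<dots> \<le> (n - 1) * \<bar>ln Q\<bar> powr ((n - 5) / n)"
      using L n by (intro mult_left_mono ge_one_powr_ge_zero) auto
    finally show ?thesis .
  qed
  then have "Q powr ((n - 1) / (n - 2)) * (Q powr (1 / (n - 2)) * (1 + ln (1 / Q)))
               \<le> Q powr ((n - 1) / (n - 2)) * ((n - 1) * \<bar>ln Q\<bar> powr ((n - 5) / n))"
    by (rule mult_left_mono) simp
  ultimately show ?thesis
    by (simp add: mult_ac)
qed

lemma nn_integral_bubble_triple_le_dim6:
  fixes z1 z2 z3 :: "'a::euclidean_space"
  assumes l: "0 < l1" "0 < l2" "0 < l3" and dim: "DIM('a) = 6"
  defines "Q \<equiv> max (qint z1 l1 z2 l2) (max (qint z1 l1 z3 l3) (qint z2 l2 z3 l3))"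
  assumes Q_small: "Q \<le> exp (-1)"
  shows "(\<integral>\<^sup>+x. ennreal (bubble z1 l1 x * bubble z2 l2 x * bubble z3 l3 x) \<partial>lborel)
           \<le> ennreal (real DIM('a) * triple_constant TYPE('a) * Q powr (3 / 2) * ln (1 / Q))"
proof -
  have Q: "0 < Q"
    unfolding Q_def using qint_pos[OF l(1) l(2), of z1 z2] by simp
  have C: "0 < triple_constant TYPE('a)"
    using dim by (intro triple_constant_pos) simp
  have "(\<integral>\<^sup>+x. ennreal (bubble z1 l1 x * bubble z2 l2 x * bubble z3 l3 x) \<partial>lborel)
          \<le> ennreal (triple_constant TYPE('a) * (Q powr (3 / 2) * (1 + ln (1 / Q))))"
    using nn_integral_bubble_triple_le[OF l, of z1 z2 z3] dim
    unfolding Q_def bubble_powr_crit_exp_dim6[OF dim] by simp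
  also have "\<dots> \<le> ennreal (real DIM('a) * triple_constant TYPE('a) * Q powr (3 / 2) * ln (1 / Q))"
    using one_plus_ln_inverse_le_twice[OF Q Q_small] C Q dim
    by (intro ennreal_leI) (simp add: mult_left_mono)
  finally show ?thesis .
qed

lemma nn_integral_bubble_triple_le_dim_ge_7:
  fixes z1 z2 z3 :: "'a::euclidean_space"
  assumes l: "0 < l1" "0 < l2" "0 < l3" and dim: "7 \<le> DIM('a)"
  defines "Q \<equiv> max (qint z1 l1 z2 l2) (max (qint z1 l1 z3 l3) (qint z2 l2 z3 l3))"
  assumes Q_small: "Q \<le> exp (-1)"
  shows "(\<integral>\<^sup>+x. ennreal (bubble z1 l1 x powr (crit_exp TYPE('a) - 1) * bubble z2 l2 x * bubble z3 l3 x) \<partial>lborel)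
           \<le> ennreal (real DIM('a) * triple_constant TYPE('a) * Q powr ((real DIM('a) - 1) / (real DIM('a) - 2))
                       * \<bar>ln Q\<bar> powr ((real DIM('a) - 5) / real DIM('a)))"
proof -
  define n where "n = real DIM('a)"
  define C where "C = triple_constant TYPE('a)"
  have Q: "0 < Q"
    unfolding Q_def using qint_pos[OF l(1) l(2), of z1 z2] by simp
  have C: "0 < C"
    unfolding C_def using dim by (intro triple_constant_pos) simp
  have n7: "7 \<le> n"
    unfolding n_def using dim by simp
  have "C * (Q powr (n / (n - 2)) * (1 + ln (1 / Q)))
          \<le> C * ((n - 1) * (Q powr ((n - 1) / (n - 2)) * \<bar>ln Q\<bar> powr ((n - 5) / n)))"
    using powr_mult_one_plus_ln_inverse_le_ln_powr[OF Q Q_small, of n] n7 C by (intro mult_left_mono) auto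
  also have "\<dots> \<le> C * (n * (Q powr ((n - 1) / (n - 2)) * \<bar>ln Q\<bar> powr ((n - 5) / n)))"
    using C by (intro mult_left_mono mult_right_mono) auto
  finally have "ennreal (C * (Q powr (n / (n - 2)) * (1 + ln (1 / Q))))
                  \<le> ennreal (n * C * Q powr ((n - 1) / (n - 2)) * \<bar>ln Q\<bar> powr ((n - 5) / n))"
    by (intro ennreal_leI) (simp add: mult_ac)
  with nn_integral_bubble_triple_le[OF l, of z1 z2 z3] dim show ?thesis
    unfolding Q_def C_def n_def by (auto intro: order_trans)
qed

theorem lemmaA3:
  assumes "DIM('a::euclidean_space) \<ge> 6"
  shows "\<exists>\<delta>0>0. \<exists>C>0. \<forall>(z1::'a) z2 z3 l1 l2 l3 \<delta>.
     l1 > 0 \<and> l2 > 0 \<and> l3 > 0 \<and> \<delta> \<le> \<delta>0 \<and>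
     max (qint z1 l1 z2 l2) (max (qint z1 l1 z3 l3) (qint z2 l2 z3 l3)) < \<delta> \<longrightarrow>
     (let Q = max (qint z1 l1 z2 l2) (max (qint z1 l1 z3 l3) (qint z2 l2 z3 l3)) in
       (DIM('a) = 6 \<longrightarrow>
          (\<integral>\<^sup>+ x. ennreal (bubble z1 l1 x * bubble z2 l2 x * bubble z3 l3 x) \<partial>lborel)
            \<le> ennreal (C * Q powr (3/2) * ln (1 / Q))) \<and>
       (DIM('a) \<ge> 7 \<longrightarrow>
          (\<integral>\<^sup>+ x. ennreal (bubble z1 l1 x powr (crit_exp TYPE('a) - 1) * bubble z2 l2 x * bubble z3 l3 x) \<partial>lborel)
            \<le> ennreal (C * Q powr ((real DIM('a) - 1) / (real DIM('a) - 2)) * \<bar>ln Q\<bar> powr ((real DIM('a) - 5) / real DIM('a)))))"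
proof (rule exI[of _ "exp (-1)"], intro conjI exI[of _ "real DIM('a) * triple_constant TYPE('a)"] allI impI)
  have "0 < triple_constant TYPE('a)"
    using assms by (intro triple_constant_pos) simp
  then show "0 < real DIM('a) * triple_constant TYPE('a)"
    by simp
  fix z1 z2 z3 :: 'a and l1 l2 l3 \<delta> :: real
  assume "0 < l1 \<and> 0 < l2 \<and> 0 < l3 \<and> \<delta> \<le> exp (-1) \<and>
    max (qint z1 l1 z2 l2) (max (qint z1 l1 z3 l3) (qint z2 l2 z3 l3)) < \<delta>"
  then show "let Q = max (qint z1 l1 z2 l2) (max (qint z1 l1 z3 l3) (qint z2 l2 z3 l3)) in
       (DIM('a) = 6 \<longrightarrow>
          (\<integral>\<^sup>+ x. ennreal (bubble z1 l1 x * bubble z2 l2 x * bubble z3 l3 x) \<partial>lborel)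
            \<le> ennreal (real DIM('a) * triple_constant TYPE('a) * Q powr (3/2) * ln (1 / Q))) \<and>
       (DIM('a) \<ge> 7 \<longrightarrow>
          (\<integral>\<^sup>+ x. ennreal (bubble z1 l1 x powr (crit_exp TYPE('a) - 1) * bubble z2 l2 x * bubble z3 l3 x) \<partial>lborel)
            \<le> ennreal (real DIM('a) * triple_constant TYPE('a) * Q powr ((real DIM('a) - 1) / (real DIM('a) - 2))
                        * \<bar>ln Q\<bar> powr ((real DIM('a) - 5) / real DIM('a))))"
    unfolding Let_def
    by (intro conjI impI nn_integral_bubble_triple_le_dim6 nn_integral_bubble_triple_le_dim_ge_7) auto
qed simp

end
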